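(* Let $D$ be an associative division algebra finite-dimensional over its center $F$, let $\sigma\in\mathrm{Aut}(D)$ be such that $\sigma|_F$ has finite order $m$, let $F_0=\mathrm{Fix}(\sigma)\cap F$, and let $A=(D,\sigma,d)$ with $d\in D\setminus F_0$. (i) The subgroup of $F_0$-automorphisms of $A$ extending $\mathrm{id}_D$ is isomorphic to $\{k\in F^\times\mid k\sigma(k)\cdots\sigma^{m-1}(k)=1\}$. (ii) If $F_0$ contains a primitive $m$th root of unity $\omega$, then $\langle H_{\mathrm{id},\omega}\rangle$ is a cyclic subgroup of $\mathrm{Aut}_{F_0}(A)$ of order $m$.
   Context: $D[t;\sigma]$ is the twisted polynomial ring: polynomials $\sum a_it^i$ ($a_i\in D$), multiplication determined by $ta=\sigma(a)t$. For $d\in D^\times$, $(D,\sigma,d)$ is the set of polynomials of degree $<m$ in $D[t;\sigma]$ with multiplication $g\circ h=$ remainder of $gh$ on right division by $t^m-d$; it is a unital algebra over $F_0$ containing $D$. For $k\in F^\times$, $H_{\mathrm{id},k}(\sum_{i=0}^{m-1}a_it^i)=a_0+\sum_{i=1}^{m-1}a_i\big(\prod_{l=0}^{i-1}\sigma^l(k)\big)t^i$. *)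

theory Defs
  imports "HOL-Algebra.Multiplicative_Group"
begin

text \<open>The division algebra D is the whole type 'a :: division_ring.\<close>

definition center :: "'a::division_ring set" where
  "center = {z. \<forall>x. z * x = x * z}"

definition fin_dim_over_center :: "'a::division_ring itself \<Rightarrow> bool" where
  "fin_dim_over_center _ \<longleftrightarrow>
     (\<exists>B :: 'a set. finite B \<and>
        (\<forall>x. \<exists>c. (\<forall>b\<in>B. c b \<in> center) \<and> x = (\<Sum>b\<in>B. c b * b)))"

definition ring_aut :: "('a::division_ring \<Rightarrow> 'a) \<Rightarrow> bool" where
  "ring_aut \<sigma> \<longleftrightarrow> bij \<sigma> \<and> (\<forall>x y. \<sigma> (x + y) = \<sigma> x + \<sigma> y) \<and>
                 (\<forall>x y. \<sigma> (x * y) = \<sigma> x * \<sigma> y)"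

definition restr_order :: "('a::division_ring \<Rightarrow> 'a) \<Rightarrow> nat \<Rightarrow> bool" where
  "restr_order \<sigma> m \<longleftrightarrow> 0 < m \<and> (\<forall>z\<in>center. (\<sigma> ^^ m) z = z) \<and>
      (\<forall>k. 0 < k \<and> k < m \<longrightarrow> (\<exists>z\<in>center. (\<sigma> ^^ k) z \<noteq> z))"

definition fixed_center :: "('a::division_ring \<Rightarrow> 'a) \<Rightarrow> 'a set" where
  "fixed_center \<sigma> = {z \<in> center. \<sigma> z = z}"

text \<open>Polynomials are coefficient functions nat => 'a with finite support.\<close>

definition tpoly :: "(nat \<Rightarrow> 'a::division_ring) set" where
  "tpoly = {p. finite {n. p n \<noteq> 0}}"

text \<open>Product in D[t;\<sigma>], determined by t a = \<sigma>(a) t.\<close>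
definition tmul :: "('a::division_ring \<Rightarrow> 'a) \<Rightarrow> (nat \<Rightarrow> 'a) \<Rightarrow> (nat \<Rightarrow> 'a) \<Rightarrow> nat \<Rightarrow> 'a" where
  "tmul \<sigma> p q = (\<lambda>n. \<Sum>i\<le>n. p i * (\<sigma> ^^ i) (q (n - i)))"

definition tadd :: "(nat \<Rightarrow> 'a::division_ring) \<Rightarrow> (nat \<Rightarrow> 'a) \<Rightarrow> nat \<Rightarrow> 'a" where
  "tadd p q = (\<lambda>n. p n + q n)"

text \<open>The polynomial t^m - d.\<close>
definition tmod :: "nat \<Rightarrow> 'a::division_ring \<Rightarrow> nat \<Rightarrow> 'a" where
  "tmod m d = (\<lambda>n. (if n = m then 1 else 0) - (if n = 0 then d else 0))"

definition deg_lt :: "nat \<Rightarrow> (nat \<Rightarrow> 'a::division_ring) \<Rightarrow> bool" where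
  "deg_lt m r \<longleftrightarrow> (\<forall>n\<ge>m. r n = 0)"

definition Acar :: "nat \<Rightarrow> (nat \<Rightarrow> 'a::division_ring) set" where
  "Acar m = {g. deg_lt m g}"

definition Amul :: "('a::division_ring \<Rightarrow> 'a) \<Rightarrow> nat \<Rightarrow> 'a \<Rightarrow> (nat \<Rightarrow> 'a) \<Rightarrow> (nat \<Rightarrow> 'a) \<Rightarrow> nat \<Rightarrow> 'a" where
  "Amul \<sigma> m d g h = (THE r. deg_lt m r \<and>
       (\<exists>q \<in> tpoly. tmul \<sigma> g h = tadd (tmul \<sigma> q (tmod m d)) r))"

definition const :: "'a::division_ring \<Rightarrow> nat \<Rightarrow> 'a" where
  "const a = (\<lambda>n. if n = 0 then a else 0)"

definition smul :: "'a::division_ring \<Rightarrow> (nat \<Rightarrow> 'a) \<Rightarrow> nat \<Rightarrow> 'a" where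
  "smul c g = (\<lambda>n. c * g n)"

definition is_Aaut :: "('a::division_ring \<Rightarrow> 'a) \<Rightarrow> nat \<Rightarrow> 'a \<Rightarrow> ((nat \<Rightarrow> 'a) \<Rightarrow> (nat \<Rightarrow> 'a)) \<Rightarrow> bool" where
  "is_Aaut \<sigma> m d H \<longleftrightarrow>
     bij_betw H (Acar m) (Acar m) \<and> H \<in> extensional (Acar m) \<and>
     (\<forall>g\<in>Acar m. \<forall>h\<in>Acar m. H (tadd g h) = tadd (H g) (H h)) \<and>
     (\<forall>c\<in>fixed_center \<sigma>. \<forall>g\<in>Acar m. H (smul c g) = smul c (H g)) \<and>
     (\<forall>g\<in>Acar m. \<forall>h\<in>Acar m. H (Amul \<sigma> m d g h) = Amul \<sigma> m d (H g) (H h))"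

definition AutA :: "('a::division_ring \<Rightarrow> 'a) \<Rightarrow> nat \<Rightarrow> 'a \<Rightarrow> ((nat \<Rightarrow> 'a) \<Rightarrow> (nat \<Rightarrow> 'a)) monoid" where
  "AutA \<sigma> m d = \<lparr>carrier = {H. is_Aaut \<sigma> m d H},
                   mult = (\<lambda>H G. compose (Acar m) H G),
                   one = restrict id (Acar m)\<rparr>"

definition AutA_id :: "('a::division_ring \<Rightarrow> 'a) \<Rightarrow> nat \<Rightarrow> 'a \<Rightarrow> ((nat \<Rightarrow> 'a) \<Rightarrow> (nat \<Rightarrow> 'a)) monoid" where
  "AutA_id \<sigma> m d = \<lparr>carrier = {H. is_Aaut \<sigma> m d H \<and> (\<forall>a. H (const a) = const a)},
                   mult = (\<lambda>H G. compose (Acar m) H G),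
                   one = restrict id (Acar m)\<rparr>"

definition normone_group :: "('a::division_ring \<Rightarrow> 'a) \<Rightarrow> nat \<Rightarrow> 'a monoid" where
  "normone_group \<sigma> m = \<lparr>carrier = {k \<in> center. k \<noteq> 0 \<and> prod_list (map (\<lambda>l. (\<sigma> ^^ l) k) [0..<m]) = 1},
                         mult = (*), one = 1\<rparr>"

definition Hid :: "('a::division_ring \<Rightarrow> 'a) \<Rightarrow> nat \<Rightarrow> 'a \<Rightarrow> (nat \<Rightarrow> 'a) \<Rightarrow> nat \<Rightarrow> 'a" where
  "Hid \<sigma> m k = restrict (\<lambda>g. \<lambda>i. if i = 0 then g 0 else g i * prod_list (map (\<lambda>l. (\<sigma> ^^ l) k) [0..<i])) (Acar m)"

end

theory Submission
  imports Defs
begin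

text \<open>An \<open>F\<^sub>0\<close>-automorphism \<open>H\<close> of \<open>A\<close> fixing \<open>D\<close> is determined by
  \<open>H(t) = \<Sum> p\<^sub>n t\<^sup>n\<close>. Applying \<open>H\<close> to \<open>t a = \<sigma>(a) t\<close> gives \<open>p\<^sub>n \<sigma>\<^sup>n(a) = \<sigma>(a) p\<^sub>n\<close>;
  for central \<open>a\<close> this forces \<open>\<sigma>\<^sup>n = \<sigma>\<close> on \<open>F\<close> whenever \<open>p\<^sub>n \<noteq> 0\<close>, which for \<open>n < m\<close>
  happens only at \<open>n = 1\<close> because \<open>\<sigma>\<close> has order \<open>m\<close> on \<open>F\<close>. Hence \<open>H(t) = k t\<close> with
  \<open>k \<in> F\<close> nonzero, multiplicativity gives \<open>H(a t\<^sup>i) = a k \<sigma>(k) \<dots> \<sigma>^(i-1)(k) t\<^sup>i\<close>, i.e.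
  \<open>H = H_{id,k}\<close>, and applying \<open>H\<close> to \<open>t^(m-1) t = d \<noteq> 0\<close> forces \<open>k \<sigma>(k) \<dots> \<sigma>^(m-1)(k) = 1\<close>.
  Conversely every such \<open>k\<close> gives an automorphism, and \<open>H_{id,k} \<circ> H_{id,k'} = H_{id,kk'}\<close>.
  For (ii), \<open>H_{id,\<omega>}\<^sup>j = H_{id,\<omega>^j}\<close> is the identity exactly when \<open>\<omega>\<^sup>j = 1\<close>.\<close>

lemma ring_aut_add: "ring_aut f \<Longrightarrow> f (x + y) = f x + f y"
  and ring_aut_mult: "ring_aut f \<Longrightarrow> f (x * y) = f x * f y"
  and ring_aut_bij: "ring_aut f \<Longrightarrow> bij f"
  unfolding ring_aut_def by auto

lemma ring_aut_zero: "ring_aut f \<Longrightarrow> f 0 = 0"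
  using ring_aut_add[of f 0 0] by simp

lemma ring_aut_diff: assumes "ring_aut f" shows "f (x - y) = f x - f y"
  using ring_aut_add[OF assms, of "x - y" y] by (simp add: eq_diff_eq)

lemma ring_aut_one: assumes "ring_aut f" shows "f 1 = 1"
proof -
  obtain u where "1 = f u" using ring_aut_bij[OF assms] by (metis bij_pointE)
  then show ?thesis using ring_aut_mult[OF assms, of 1 u] by simp
qed

lemma ring_aut_funpow: assumes "ring_aut f" shows "ring_aut (f ^^ n)"
proof (induction n)
  case 0 then show ?case using bij_id by (simp add: ring_aut_def id_def)
next
  case (Suc n)
  have "bij (f \<circ> f ^^ n)" using ring_aut_bij[OF Suc.IH] ring_aut_bij[OF assms] by (rule bij_comp)
  then show ?case
    using ring_aut_add[OF Suc.IH] ring_aut_mult[OF Suc.IH] ring_aut_add[OF assms] ring_aut_mult[OF assms]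
    unfolding ring_aut_def funpow.simps by simp
qed

lemma center_comm: "a \<in> center \<Longrightarrow> a * x = x * a"
  unfolding center_def by auto

lemma center_one: "1 \<in> center"
  unfolding center_def by simp

lemma center_mult: assumes "a \<in> center" "b \<in> center" shows "a * b \<in> center"
  unfolding center_def
proof (intro CollectI allI)
  fix x
  have "a * b * x = a * (x * b)" by (simp add: mult.assoc center_comm[OF assms(2)])
  also have "\<dots> = (x * a) * b" by (simp only: mult.assoc[symmetric] center_comm[OF assms(1)])
  also have "\<dots> = x * (a * b)" by (simp only: mult.assoc)
  finally show "a * b * x = x * (a * b)" .
qed

lemma center_power: "a \<in> center \<Longrightarrow> a ^ n \<in> center"
  by (induction n) (simp_all add: center_one center_mult)

lemma center_inverse: assumes "a \<in> center" shows "inverse a \<in> center"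
  unfolding center_def
proof (intro CollectI allI)
  fix x
  show "inverse a * x = x * inverse a"
  proof (cases "a = 0")
    case False
    have "inverse a * x = inverse a * (x * a) * inverse a" using False by (simp add: mult.assoc)
    also have "\<dots> = x * inverse a"
      using False by (simp add: center_comm[OF assms, of x, symmetric] mult.assoc[symmetric])
    finally show ?thesis .
  qed simp
qed

lemma ring_aut_center: assumes "ring_aut f" "z \<in> center" shows "f z \<in> center"
  unfolding center_def
proof (intro CollectI allI)
  fix x
  obtain y where "x = f y" using ring_aut_bij[OF assms(1)] by (metis bij_pointE)
  then show "f z * x = x * f z"
    using center_comm[OF assms(2), of y] by (simp add: ring_aut_mult[OF assms(1), symmetric])
qed

definition twisted_prod :: "('a::division_ring \<Rightarrow> 'a) \<Rightarrow> 'a \<Rightarrow> nat \<Rightarrow> 'a" where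
  "twisted_prod \<sigma> k i = prod_list (map (\<lambda>l. (\<sigma> ^^ l) k) [0..<i])"

lemma twisted_prod_0 [simp]: "twisted_prod \<sigma> k 0 = 1"
  by (simp add: twisted_prod_def)

lemma twisted_prod_Suc: "twisted_prod \<sigma> k (Suc i) = twisted_prod \<sigma> k i * (\<sigma> ^^ i) k"
  by (simp add: twisted_prod_def)

lemma twisted_prod_add:
  assumes "ring_aut \<sigma>"
  shows "twisted_prod \<sigma> k (i + j) = twisted_prod \<sigma> k i * (\<sigma> ^^ i) (twisted_prod \<sigma> k j)"
proof (induction j)
  case 0 then show ?case using ring_aut_one[OF ring_aut_funpow[OF assms]] by simp
next
  case (Suc j)
  then show ?case
    by (simp add: twisted_prod_Suc funpow_add ring_aut_mult[OF ring_aut_funpow[OF assms]] mult.assoc)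
qed

lemma twisted_prod_center:
  assumes "ring_aut \<sigma>" "k \<in> center" shows "twisted_prod \<sigma> k i \<in> center"
  by (induction i)
    (simp_all add: twisted_prod_Suc center_one center_mult ring_aut_center[OF ring_aut_funpow[OF assms(1)] assms(2)])

lemma twisted_prod_mult:
  assumes "ring_aut \<sigma>" "k \<in> center"
  shows "twisted_prod \<sigma> (k * k') i = twisted_prod \<sigma> k i * twisted_prod \<sigma> k' i"
proof (induction i)
  case 0 then show ?case by simp
next
  case (Suc i)
  have "twisted_prod \<sigma> k i * twisted_prod \<sigma> k' i * ((\<sigma> ^^ i) k * (\<sigma> ^^ i) k')
      = twisted_prod \<sigma> k i * ((\<sigma> ^^ i) k * twisted_prod \<sigma> k' i) * (\<sigma> ^^ i) k'"
    using center_comm[OF ring_aut_center[OF ring_aut_funpow[OF assms(1)] assms(2)]]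
    by (simp add: mult.assoc)
  then show ?case
    using Suc by (simp add: twisted_prod_Suc ring_aut_mult[OF ring_aut_funpow[OF assms(1)]] mult.assoc)
qed

lemma twisted_prod_fixed: assumes "\<sigma> k = k" shows "twisted_prod \<sigma> k i = k ^ i"
proof -
  have "(\<sigma> ^^ l) k = k" for l by (induction l) (simp_all add: assms)
  then show ?thesis by (induction i) (simp_all add: twisted_prod_Suc power_commutes)
qed

lemma twisted_prod_period:
  assumes "ring_aut \<sigma>" "twisted_prod \<sigma> k m = 1"
  shows "twisted_prod \<sigma> k (n + m) = twisted_prod \<sigma> k n"
  using twisted_prod_add[OF assms(1), of k n m] assms(2) ring_aut_one[OF ring_aut_funpow[OF assms(1)]]
  by simp

definition tmonom :: "nat \<Rightarrow> 'a::division_ring \<Rightarrow> nat \<Rightarrow> 'a" where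
  "tmonom i a = (\<lambda>n. if n = i then a else 0)"

lemma const_eq_tmonom: "const a = tmonom 0 a"
  by (simp add: const_def tmonom_def)

lemma tmonom_in_Acar: "i < m \<Longrightarrow> tmonom i a \<in> Acar m"
  by (simp add: tmonom_def Acar_def deg_lt_def)

lemma Acar_high: "g \<in> Acar m \<Longrightarrow> m \<le> n \<Longrightarrow> g n = 0"
  by (simp add: Acar_def deg_lt_def)

lemma tadd_in_Acar: "g \<in> Acar m \<Longrightarrow> h \<in> Acar m \<Longrightarrow> tadd g h \<in> Acar m"
  by (simp add: Acar_def deg_lt_def tadd_def)

lemma smul_in_Acar: "g \<in> Acar m \<Longrightarrow> smul c g \<in> Acar m"
  by (simp add: Acar_def deg_lt_def smul_def)

lemma tmul_tmonom_left: "tmul \<sigma> (tmonom i a) h n = (if i \<le> n then a * (\<sigma> ^^ i) (h (n - i)) else 0)"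
proof -
  have "tmul \<sigma> (tmonom i a) h n = (\<Sum>j\<le>n. if j = i then a * (\<sigma> ^^ j) (h (n - j)) else 0)"
    unfolding tmul_def tmonom_def by (rule sum.cong) auto
  then show ?thesis by (simp add: sum.delta')
qed

lemma tmul_const_right:
  assumes "ring_aut \<sigma>" shows "tmul \<sigma> g (tmonom 0 a) n = g n * (\<sigma> ^^ n) a"
proof -
  have "tmul \<sigma> g (tmonom 0 a) n = (\<Sum>j\<le>n. if j = n then g j * (\<sigma> ^^ j) a else 0)"
    unfolding tmul_def tmonom_def
    using ring_aut_zero[OF ring_aut_funpow[OF assms]] by (intro sum.cong) auto
  then show ?thesis by (simp add: sum.delta')
qed

lemma tmul_tmonom_tmonom:
  assumes "ring_aut \<sigma>"
  shows "tmul \<sigma> (tmonom i a) (tmonom j b) n = (if n = i + j then a * (\<sigma> ^^ i) b else 0)"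
  unfolding tmul_tmonom_left by (auto simp: tmonom_def ring_aut_zero[OF ring_aut_funpow[OF assms]])

lemma tmul_tmod:
  assumes "ring_aut \<sigma>"
  shows "tmul \<sigma> q (tmod m d) n = (if m \<le> n then q (n - m) else 0) - q n * (\<sigma> ^^ n) d"
proof -
  note aut = ring_aut_funpow[OF assms]
  have "tmul \<sigma> q (tmod m d) n = (\<Sum>i\<le>n. (if i = n - m \<and> m \<le> n then q i else 0)
      - (if i = n then q i * (\<sigma> ^^ i) d else 0))"
    unfolding tmul_def tmod_def
    by (intro sum.cong refl)
      (auto simp: right_diff_distrib ring_aut_zero[OF aut] ring_aut_one[OF aut] ring_aut_diff[OF aut])
  also have "\<dots> = (\<Sum>i\<le>n. (if i = n - m \<and> m \<le> n then q i else 0))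
      - (\<Sum>i\<le>n. (if i = n then q i * (\<sigma> ^^ i) d else 0))"
    by (rule sum_subtractf)
  also have "(\<Sum>i\<le>n. (if i = n - m \<and> m \<le> n then q i else 0)) = (if m \<le> n then q (n - m) else 0)"
    by (cases "m \<le> n") (simp_all add: sum.delta')
  finally show ?thesis by (simp add: sum.delta')
qed

lemma tmul_high:
  assumes "ring_aut \<sigma>" "g \<in> Acar m" "h \<in> Acar m" "m + m \<le> n"
  shows "tmul \<sigma> g h n = 0"
  unfolding tmul_def
proof (intro sum.neutral ballI)
  fix i assume "i \<in> {..n}"
  show "g i * (\<sigma> ^^ i) (h (n - i)) = 0"
  proof (cases "i < m")
    case True
    then have "h (n - i) = 0" using assms(3,4) by (intro Acar_high) auto
    then show ?thesis using ring_aut_zero[OF ring_aut_funpow[OF assms(1)]] by simp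
  next
    case False
    then show ?thesis using Acar_high[OF assms(2)] by simp
  qed
qed

lemma tmod_quotient_bounded:
  assumes "0 < m" "q \<in> tpoly"
    and step: "\<And>j. m \<le> j \<Longrightarrow> q j \<noteq> 0 \<Longrightarrow> q (j + m) \<noteq> 0"
  shows "m \<le> j \<Longrightarrow> q j = 0"
proof (rule ccontr)
  assume j: "m \<le> j" "q j \<noteq> 0"
  let ?S = "{n. q n \<noteq> 0}"
  have fin: "finite ?S" using assms(2) by (simp add: tpoly_def)
  have "j \<le> Max ?S" using j(2) fin by (simp add: Max_ge)
  moreover have "Max ?S \<in> ?S" using j(2) fin by (intro Max_in) auto
  ultimately have "Max ?S + m \<in> ?S" using j(1) step by auto
  then show False using fin Max_ge[OF fin, of "Max ?S + m"] assms(1) by simp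
qed

lemma tmod_remainder_unique:
  assumes \<sigma>: "ring_aut \<sigma>" and m: "0 < m" and c_high: "\<And>n. m + m \<le> n \<Longrightarrow> c n = 0"
    and q: "q \<in> tpoly" and r: "deg_lt m r" and c: "c = tadd (tmul \<sigma> q (tmod m d)) r"
  shows "r = (\<lambda>n. if n < m then c n + c (n + m) * (\<sigma> ^^ n) d else 0)"
proof -
  have r_high: "m \<le> n \<Longrightarrow> r n = 0" for n using r by (simp add: deg_lt_def)
  have c_eq: "c n = (if m \<le> n then q (n - m) else 0) - q n * (\<sigma> ^^ n) d + r n" for n
    using c by (simp add: tadd_def tmul_tmod[OF \<sigma>])
  have q_high: "q j = 0" if "m \<le> j" for j
  proof (rule tmod_quotient_bounded[OF m q _ that])
    fix j assume "m \<le> j" "q j \<noteq> 0"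
    then show "q (j + m) \<noteq> 0" using c_eq[of "j + m"] c_high[of "j + m"] r_high[of "j + m"] by auto
  qed
  show ?thesis
  proof (rule ext)
    fix n show "r n = (if n < m then c n + c (n + m) * (\<sigma> ^^ n) d else 0)"
      using c_eq[of n] c_eq[of "n + m"] q_high[of "n + m"] r_high[of "n + m"] r_high[of n] by auto
  qed
qed

lemma tmod_remainder_exists:
  assumes \<sigma>: "ring_aut \<sigma>" and c_high: "\<And>n. m + m \<le> n \<Longrightarrow> c n = 0"
  shows "\<exists>q\<in>tpoly. c = tadd (tmul \<sigma> q (tmod m d)) (\<lambda>n. if n < m then c n + c (n + m) * (\<sigma> ^^ n) d else 0)"
proof
  let ?q = "\<lambda>j. c (j + m)"
  have "x < m" if "?q x \<noteq> 0" for x using c_high[of "x + m"] that by (cases "x < m") auto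
  then have "{n. ?q n \<noteq> 0} \<subseteq> {..<m}" by auto
  then show "?q \<in> tpoly" unfolding tpoly_def by (auto intro: finite_subset)
  show "c = tadd (tmul \<sigma> ?q (tmod m d)) (\<lambda>n. if n < m then c n + c (n + m) * (\<sigma> ^^ n) d else 0)"
    using c_high by (auto simp: fun_eq_iff tadd_def tmul_tmod[OF \<sigma>] not_less)
qed

text \<open>Since \<open>t\<^sup>m \<equiv> d\<close>, a term \<open>c t^(n+m)\<close> with \<open>n < m\<close> reduces to \<open>c \<sigma>\<^sup>n(d) t\<^sup>n\<close>,
  and a product of two elements of \<open>A\<close> has degree below \<open>2m\<close>.\<close>

lemma Amul_eq:
  assumes \<sigma>: "ring_aut \<sigma>" and m: "0 < m" and g: "g \<in> Acar m" and h: "h \<in> Acar m"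
  shows "Amul \<sigma> m d g h = (\<lambda>n. if n < m then tmul \<sigma> g h n + tmul \<sigma> g h (n + m) * (\<sigma> ^^ n) d else 0)"
  unfolding Amul_def
proof (rule the_equality)
  note high = tmul_high[OF \<sigma> g h]
  show "deg_lt m (\<lambda>n. if n < m then tmul \<sigma> g h n + tmul \<sigma> g h (n + m) * (\<sigma> ^^ n) d else 0) \<and>
      (\<exists>q\<in>tpoly. tmul \<sigma> g h = tadd (tmul \<sigma> q (tmod m d))
        (\<lambda>n. if n < m then tmul \<sigma> g h n + tmul \<sigma> g h (n + m) * (\<sigma> ^^ n) d else 0))"
    using tmod_remainder_exists[where c = "tmul \<sigma> g h", OF \<sigma> high] by (simp add: deg_lt_def)
  show "r = (\<lambda>n. if n < m then tmul \<sigma> g h n + tmul \<sigma> g h (n + m) * (\<sigma> ^^ n) d else 0)"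
    if "deg_lt m r \<and> (\<exists>q\<in>tpoly. tmul \<sigma> g h = tadd (tmul \<sigma> q (tmod m d)) r)" for r
    using that tmod_remainder_unique[where c = "tmul \<sigma> g h", OF \<sigma> m high] by blast
qed

lemma Amul_in_Acar:
  "ring_aut \<sigma> \<Longrightarrow> 0 < m \<Longrightarrow> g \<in> Acar m \<Longrightarrow> h \<in> Acar m \<Longrightarrow> Amul \<sigma> m d g h \<in> Acar m"
  by (simp add: Amul_eq Acar_def deg_lt_def)

lemma Amul_tmonom:
  assumes "ring_aut \<sigma>" "i < m" "j < m"
  shows "Amul \<sigma> m d (tmonom i a) (tmonom j b) = (if i + j < m then tmonom (i + j) (a * (\<sigma> ^^ i) b)
     else tmonom (i + j - m) (a * (\<sigma> ^^ i) b * (\<sigma> ^^ (i + j - m)) d))"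
proof -
  have "0 < m" using assms(2) by simp
  have "Amul \<sigma> m d (tmonom i a) (tmonom j b) = (\<lambda>n. if n < m then (if n = i + j then a * (\<sigma> ^^ i) b else 0)
     + (if n + m = i + j then a * (\<sigma> ^^ i) b else 0) * (\<sigma> ^^ n) d else 0)"
    unfolding Amul_eq[OF assms(1) \<open>0 < m\<close> tmonom_in_Acar[OF assms(2)] tmonom_in_Acar[OF assms(3)]]
      tmul_tmonom_tmonom[OF assms(1)] ..
  then show ?thesis using assms(2,3) by (auto simp: fun_eq_iff tmonom_def)
qed

lemma Amul_const_left:
  assumes "ring_aut \<sigma>" "0 < m" "g \<in> Acar m"
  shows "Amul \<sigma> m d (tmonom 0 a) g = (\<lambda>n. a * g n)"
  using assms Acar_high[OF assms(3)] by (auto simp: Amul_eq tmonom_in_Acar fun_eq_iff tmul_tmonom_left)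

lemma Amul_const_right:
  assumes "ring_aut \<sigma>" "0 < m" "g \<in> Acar m"
  shows "Amul \<sigma> m d g (tmonom 0 a) = (\<lambda>n. g n * (\<sigma> ^^ n) a)"
  using assms Acar_high[OF assms(3)] by (auto simp: Amul_eq tmonom_in_Acar fun_eq_iff tmul_const_right)

lemma Hid_eq: "g \<in> Acar m \<Longrightarrow> Hid \<sigma> m k g = (\<lambda>n. g n * twisted_prod \<sigma> k n)"
  unfolding Hid_def twisted_prod_def[symmetric] by (auto simp: fun_eq_iff)

lemma Hid_in_Acar: "g \<in> Acar m \<Longrightarrow> Hid \<sigma> m k g \<in> Acar m"
  using Acar_high[of g m] by (simp add: Hid_eq Acar_def deg_lt_def)

lemma Hid_const: "0 < m \<Longrightarrow> Hid \<sigma> m k (const a) = const a"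
  using tmonom_in_Acar[of 0 m a] by (simp add: const_eq_tmonom Hid_eq fun_eq_iff tmonom_def)

lemma Hid_tmonom_1: assumes "1 < m" shows "Hid \<sigma> m k (tmonom 1 1) 1 = k"
  unfolding Hid_eq[OF tmonom_in_Acar[OF assms]] by (simp add: tmonom_def twisted_prod_Suc)

lemma Hid_Hid:
  assumes "ring_aut \<sigma>" "k \<in> center" "g \<in> Acar m"
  shows "Hid \<sigma> m k (Hid \<sigma> m k' g) = Hid \<sigma> m (k * k') g"
  using center_comm[OF twisted_prod_center[OF assms(1,2)]] Hid_in_Acar[OF assms(3)]
  by (simp add: Hid_eq[OF assms(3)] Hid_eq twisted_prod_mult[OF assms(1,2)] fun_eq_iff mult.assoc)

lemma Hid_1: "ring_aut \<sigma> \<Longrightarrow> g \<in> Acar m \<Longrightarrow> Hid \<sigma> m 1 g = g"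
  using twisted_prod_fixed[of \<sigma> 1] by (simp add: Hid_eq ring_aut_one)

lemma compose_Hid:
  assumes "ring_aut \<sigma>" "k \<in> center"
  shows "compose (Acar m) (Hid \<sigma> m k) (Hid \<sigma> m k') = Hid \<sigma> m (k * k')"
proof (rule extensionalityI[OF compose_extensional])
  show "Hid \<sigma> m (k * k') \<in> extensional (Acar m)" by (simp add: Hid_def)
qed (simp add: compose_eq Hid_Hid[OF assms])

lemma restrict_id_eq_Hid_1: "ring_aut \<sigma> \<Longrightarrow> restrict id (Acar m) = Hid \<sigma> m 1"
proof (rule extensionalityI[OF restrict_extensional])
  show "Hid \<sigma> m 1 \<in> extensional (Acar m)" by (simp add: Hid_def)
qed (simp add: Hid_1)

lemma tmul_Hid:
  assumes \<sigma>: "ring_aut \<sigma>" and k: "k \<in> center" and g: "g \<in> Acar m" and h: "h \<in> Acar m"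
  shows "tmul \<sigma> (Hid \<sigma> m k g) (Hid \<sigma> m k h) n = tmul \<sigma> g h n * twisted_prod \<sigma> k n"
proof -
  have "g i * twisted_prod \<sigma> k i * (\<sigma> ^^ i) (h (n - i) * twisted_prod \<sigma> k (n - i))
      = g i * (\<sigma> ^^ i) (h (n - i)) * twisted_prod \<sigma> k n" if "i \<le> n" for i
  proof -
    have "g i * twisted_prod \<sigma> k i * (\<sigma> ^^ i) (h (n - i) * twisted_prod \<sigma> k (n - i))
        = g i * (\<sigma> ^^ i) (h (n - i)) * (twisted_prod \<sigma> k i * (\<sigma> ^^ i) (twisted_prod \<sigma> k (n - i)))"
      by (simp add: ring_aut_mult[OF ring_aut_funpow[OF \<sigma>]] mult.assoc center_comm[OF twisted_prod_center[OF \<sigma> k]])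
    also have "twisted_prod \<sigma> k i * (\<sigma> ^^ i) (twisted_prod \<sigma> k (n - i)) = twisted_prod \<sigma> k n"
      using twisted_prod_add[OF \<sigma>, of k i "n - i"] that by simp
    finally show ?thesis .
  qed
  then show ?thesis by (simp add: tmul_def Hid_eq[OF g] Hid_eq[OF h] sum_distrib_right)
qed

lemma Hid_Amul:
  assumes \<sigma>: "ring_aut \<sigma>" and m: "0 < m" and k: "k \<in> center" "twisted_prod \<sigma> k m = 1"
    and g: "g \<in> Acar m" and h: "h \<in> Acar m"
  shows "Hid \<sigma> m k (Amul \<sigma> m d g h) = Amul \<sigma> m d (Hid \<sigma> m k g) (Hid \<sigma> m k h)"
  unfolding Hid_eq[OF Amul_in_Acar[OF \<sigma> m g h]]
    Amul_eq[OF \<sigma> m Hid_in_Acar[OF g] Hid_in_Acar[OF h]] tmul_Hid[OF \<sigma> k(1) g h]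
  unfolding Amul_eq[OF \<sigma> m g h] twisted_prod_period[OF \<sigma> k(2)]
  by (auto simp: fun_eq_iff distrib_right mult.assoc center_comm[OF twisted_prod_center[OF \<sigma> k(1)]])

lemma is_Aaut_Hid:
  assumes \<sigma>: "ring_aut \<sigma>" and m: "0 < m" and k: "k \<in> center" "k \<noteq> 0" "twisted_prod \<sigma> k m = 1"
  shows "is_Aaut \<sigma> m d (Hid \<sigma> m k)"
  unfolding is_Aaut_def
proof (intro conjI ballI)
  have "inverse k \<in> center" using center_inverse[OF k(1)] .
  then show "bij_betw (Hid \<sigma> m k) (Acar m) (Acar m)"
    using k(1,2) by (intro bij_betwI[where g = "Hid \<sigma> m (inverse k)"]) (auto simp: Hid_in_Acar Hid_Hid[OF \<sigma>] Hid_1[OF \<sigma>])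
  show "Hid \<sigma> m k \<in> extensional (Acar m)" unfolding Hid_def by simp
next
  fix g h :: "nat \<Rightarrow> 'a" assume gh: "g \<in> Acar m" "h \<in> Acar m"
  show "Hid \<sigma> m k (tadd g h) = tadd (Hid \<sigma> m k g) (Hid \<sigma> m k h)"
    unfolding Hid_eq[OF tadd_in_Acar[OF gh]] Hid_eq[OF gh(1)] Hid_eq[OF gh(2)]
    by (simp add: tadd_def fun_eq_iff distrib_right)
  show "Hid \<sigma> m k (Amul \<sigma> m d g h) = Amul \<sigma> m d (Hid \<sigma> m k g) (Hid \<sigma> m k h)"
    using Hid_Amul[OF \<sigma> m k(1,3) gh] .
next
  fix c :: 'a and g :: "nat \<Rightarrow> 'a" assume "g \<in> Acar m"
  then show "Hid \<sigma> m k (smul c g) = smul c (Hid \<sigma> m k g)"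
    unfolding Hid_eq[OF smul_in_Acar[OF \<open>g \<in> Acar m\<close>]] Hid_eq[OF \<open>g \<in> Acar m\<close>]
    by (simp add: smul_def fun_eq_iff mult.assoc)
qed

lemma inv_into_preserves_op:
  assumes H: "bij_betw H A A" and f: "\<And>x y. x \<in> A \<Longrightarrow> y \<in> A \<Longrightarrow> f x y \<in> A"
    and Hf: "\<And>x y. x \<in> A \<Longrightarrow> y \<in> A \<Longrightarrow> H (f x y) = f (H x) (H y)"
    and xy: "x \<in> A" "y \<in> A"
  shows "inv_into A H (f x y) = f (inv_into A H x) (inv_into A H y)"
proof -
  have inv: "inv_into A H z \<in> A" "H (inv_into A H z) = z" if "z \<in> A" for z
    using H that by (auto simp: bij_betw_def inv_into_into f_inv_into_f)
  have "f x y = H (f (inv_into A H x) (inv_into A H y))" using Hf f inv xy by simp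
  then show ?thesis using H f inv xy by (simp add: bij_betw_def inv_into_f_f)
qed

lemma is_Aaut_closed: "is_Aaut \<sigma> m d H \<Longrightarrow> g \<in> Acar m \<Longrightarrow> H g \<in> Acar m"
  unfolding is_Aaut_def bij_betw_def by auto

lemma is_Aaut_Amul:
  "is_Aaut \<sigma> m d H \<Longrightarrow> g \<in> Acar m \<Longrightarrow> h \<in> Acar m \<Longrightarrow> H (Amul \<sigma> m d g h) = Amul \<sigma> m d (H g) (H h)"
  unfolding is_Aaut_def by blast

lemma is_Aaut_tadd:
  "is_Aaut \<sigma> m d H \<Longrightarrow> g \<in> Acar m \<Longrightarrow> h \<in> Acar m \<Longrightarrow> H (tadd g h) = tadd (H g) (H h)"
  unfolding is_Aaut_def by blast

lemma is_Aaut_compose: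
  assumes \<sigma>: "ring_aut \<sigma>" and m: "0 < m" and H: "is_Aaut \<sigma> m d H" and G: "is_Aaut \<sigma> m d G"
  shows "is_Aaut \<sigma> m d (compose (Acar m) H G)"
  unfolding is_Aaut_def
proof (intro conjI ballI compose_extensional)
  have "bij_betw (H \<circ> G) (Acar m) (Acar m)" using H G unfolding is_Aaut_def using bij_betw_trans by blast
  then show "bij_betw (compose (Acar m) H G) (Acar m) (Acar m)"
    by (rule bij_betw_cong[THEN iffD1, rotated]) (simp add: compose_eq)
qed (use H G is_Aaut_closed[OF G] in \<open>simp_all add: compose_eq tadd_in_Acar smul_in_Acar Amul_in_Acar[OF \<sigma> m] is_Aaut_def\<close>)

lemma is_Aaut_restrict_id: "ring_aut \<sigma> \<Longrightarrow> 0 < m \<Longrightarrow> is_Aaut \<sigma> m d (restrict id (Acar m))"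
  unfolding is_Aaut_def
  by (auto simp: tadd_in_Acar smul_in_Acar Amul_in_Acar bij_betw_def inj_on_def)

lemma is_Aaut_inv_into:
  assumes \<sigma>: "ring_aut \<sigma>" and m: "0 < m" and H: "is_Aaut \<sigma> m d H"
  shows "is_Aaut \<sigma> m d (restrict (inv_into (Acar m) H) (Acar m))"
proof -
  let ?Y = "restrict (inv_into (Acar m) H) (Acar m)"
  have bH: "bij_betw H (Acar m) (Acar m)" using H by (simp add: is_Aaut_def)
  note inv = inv_into_preserves_op[OF bH]
  show ?thesis
    unfolding is_Aaut_def
  proof (intro conjI ballI)
    show "bij_betw ?Y (Acar m) (Acar m)"
      using bij_betw_inv_into[OF bH] bH by (simp add: bij_betw_def inj_on_def)
  next
    fix g h :: "nat \<Rightarrow> 'a" assume gh: "g \<in> Acar m" "h \<in> Acar m"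
    show "?Y (tadd g h) = tadd (?Y g) (?Y h)"
      using inv[of tadd, OF tadd_in_Acar] H gh by (simp add: tadd_in_Acar is_Aaut_def)
    show "?Y (Amul \<sigma> m d g h) = Amul \<sigma> m d (?Y g) (?Y h)"
      using inv[of "Amul \<sigma> m d", OF Amul_in_Acar[OF \<sigma> m]] H gh by (simp add: Amul_in_Acar[OF \<sigma> m] is_Aaut_def)
  next
    fix c :: 'a and g :: "nat \<Rightarrow> 'a" assume cg: "c \<in> fixed_center \<sigma>" "g \<in> Acar m"
    show "?Y (smul c g) = smul c (?Y g)"
      using inv[of "\<lambda>x y. smul c x", OF smul_in_Acar _ cg(2) cg(2)] H cg by (simp add: smul_in_Acar is_Aaut_def)
  qed simp
qed

lemma AutA_group:
  assumes \<sigma>: "ring_aut \<sigma>" and m: "0 < m"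
  shows "group (AutA \<sigma> m d)"
proof (rule groupI)
  fix H assume "H \<in> carrier (AutA \<sigma> m d)"
  then have H: "is_Aaut \<sigma> m d H" by (simp add: AutA_def)
  have "compose (Acar m) (restrict id (Acar m)) H = H"
  proof (rule ext)
    fix g show "compose (Acar m) (restrict id (Acar m)) H g = H g"
    proof (cases "g \<in> Acar m")
      case True
      then show ?thesis using is_Aaut_closed[OF H True] by (simp add: compose_eq)
    next
      case False
      have "H \<in> extensional (Acar m)" using H by (simp add: is_Aaut_def)
      then show ?thesis unfolding compose_def using extensional_arb False by fastforce
    qed
  qed
  then show "\<one>\<^bsub>AutA \<sigma> m d\<^esub> \<otimes>\<^bsub>AutA \<sigma> m d\<^esub> H = H"
    by (simp add: AutA_def)
  have "inj_on H (Acar m)" using H by (simp add: is_Aaut_def bij_betw_def)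
  then have "compose (Acar m) (restrict (inv_into (Acar m) H) (Acar m)) H = restrict id (Acar m)"
    by (intro ext) (simp add: compose_def inv_into_f_f is_Aaut_closed[OF H])
  then show "\<exists>Y\<in>carrier (AutA \<sigma> m d). Y \<otimes>\<^bsub>AutA \<sigma> m d\<^esub> H = \<one>\<^bsub>AutA \<sigma> m d\<^esub>"
    using is_Aaut_inv_into[OF \<sigma> m H] by (auto simp: AutA_def)
next
  fix H G K assume "H \<in> carrier (AutA \<sigma> m d)" "G \<in> carrier (AutA \<sigma> m d)" "K \<in> carrier (AutA \<sigma> m d)"
  then have "G \<in> Acar m \<rightarrow> Acar m" "K \<in> Acar m \<rightarrow> Acar m" by (auto simp: AutA_def is_Aaut_closed)
  then show "H \<otimes>\<^bsub>AutA \<sigma> m d\<^esub> G \<otimes>\<^bsub>AutA \<sigma> m d\<^esub> K = H \<otimes>\<^bsub>AutA \<sigma> m d\<^esub> (G \<otimes>\<^bsub>AutA \<sigma> m d\<^esub> K)"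
    by (simp add: AutA_def compose_assoc)
qed (auto simp: AutA_def is_Aaut_compose[OF \<sigma> m] is_Aaut_restrict_id[OF \<sigma> m])

lemma twisted_commuting_coeff_zero:
  assumes \<sigma>: "ring_aut \<sigma>" and ro: "restr_order \<sigma> m" and m: "1 < m" and p: "p \<in> Acar m"
    and rel: "\<And>a. p n * (\<sigma> ^^ n) a = \<sigma> a * p n" and n: "n \<noteq> 1"
  shows "p n = 0"
proof (rule ccontr)
  assume nz: "p n \<noteq> 0"
  have "n < m" using nz Acar_high[OF p] by (cases "n < m") auto
  have eq: "(\<sigma> ^^ n) z = \<sigma> z" if z: "z \<in> center" for z
  proof -
    have "p n * (\<sigma> ^^ n) z = p n * \<sigma> z"
      using rel center_comm[OF ring_aut_center[OF \<sigma> z]] by simp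
    then show ?thesis using nz by simp
  qed
  have moves: "\<exists>z\<in>center. (\<sigma> ^^ j) z \<noteq> z" if "0 < j" "j < m" for j
    using ro that by (simp add: restr_order_def)
  consider "n = 0" | j where "n = Suc j" "0 < j" using n by (cases n) auto
  then show False
  proof cases
    case 1
    then show False using moves[of 1] m eq by auto
  next
    case 2
    then obtain z where z: "z \<in> center" "(\<sigma> ^^ j) z \<noteq> z" using moves[of j] \<open>n < m\<close> by auto
    have "\<sigma> ((\<sigma> ^^ j) z) = \<sigma> z" using eq[OF z(1)] 2(1) by simp
    then show False using z(2) ring_aut_bij[OF \<sigma>] by (metis bij_is_inj injD)
  qed
qed

lemma AutA_id_image_t_commutes:
  assumes \<sigma>: "ring_aut \<sigma>" and m: "1 < m" and H: "is_Aaut \<sigma> m d H"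
    and Hc: "\<And>a. H (const a) = const a"
  shows "H (tmonom 1 1) n * (\<sigma> ^^ n) a = \<sigma> a * H (tmonom 1 1) n"
proof -
  have m0: "0 < m" and t: "tmonom 1 1 \<in> Acar m" using m by (simp_all add: tmonom_in_Acar)
  have c: "tmonom 0 b \<in> Acar m" for b :: 'a using m0 by (rule tmonom_in_Acar)
  note Hmul = is_Aaut_Amul[OF H]
  have "Amul \<sigma> m d (tmonom 1 1) (tmonom 0 a) = Amul \<sigma> m d (tmonom 0 (\<sigma> a)) (tmonom 1 1)"
    unfolding Amul_const_right[OF \<sigma> m0 t] Amul_const_left[OF \<sigma> m0 t]
    by (auto simp: tmonom_def fun_eq_iff ring_aut_zero[OF ring_aut_funpow[OF \<sigma>]])
  then have "H (Amul \<sigma> m d (tmonom 1 1) (tmonom 0 a)) = H (Amul \<sigma> m d (tmonom 0 (\<sigma> a)) (tmonom 1 1))"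
    by simp
  then have "Amul \<sigma> m d (H (tmonom 1 1)) (tmonom 0 a) = Amul \<sigma> m d (tmonom 0 (\<sigma> a)) (H (tmonom 1 1))"
    unfolding Hmul[OF t c] Hmul[OF c t] Hc[unfolded const_eq_tmonom] .
  then show ?thesis
    unfolding Amul_const_right[OF \<sigma> m0 is_Aaut_closed[OF H t]] Amul_const_left[OF \<sigma> m0 is_Aaut_closed[OF H t]]
    by (simp add: fun_eq_iff)
qed

lemma AutA_id_image_t:
  assumes \<sigma>: "ring_aut \<sigma>" and ro: "restr_order \<sigma> m" and m: "1 < m" and H: "is_Aaut \<sigma> m d H"
    and Hc: "\<And>a. H (const a) = const a"
  obtains k where "k \<in> center" "k \<noteq> 0" "H (tmonom 1 1) = tmonom 1 k"
proof
  let ?p = "H (tmonom 1 1)"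
  have t: "tmonom 1 1 \<in> Acar m" using m by (rule tmonom_in_Acar)
  note rel = AutA_id_image_t_commutes[OF \<sigma> m H Hc]
  show "?p = tmonom 1 (?p 1)"
    using twisted_commuting_coeff_zero[OF \<sigma> ro m is_Aaut_closed[OF H t] rel]
    by (auto simp: tmonom_def fun_eq_iff)
  show "?p 1 \<in> center"
    unfolding center_def
  proof (intro CollectI allI)
    fix x
    obtain y where "x = \<sigma> y" using ring_aut_bij[OF \<sigma>] by (metis bij_pointE)
    then show "?p 1 * x = x * ?p 1" using rel[of 1 y] by simp
  qed
  show "?p 1 \<noteq> 0"
  proof
    assume "?p 1 = 0"
    then have "H (tmonom 1 1) = H (const 0)"
      using \<open>?p = tmonom 1 (?p 1)\<close> Hc[of 0] by (simp add: const_def tmonom_def fun_eq_iff)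
    moreover have "inj_on H (Acar m)" using H by (simp add: is_Aaut_def bij_betw_def)
    moreover have "const 0 \<in> Acar m" using m by (simp add: const_eq_tmonom tmonom_in_Acar)
    ultimately have "tmonom 1 1 = (const 0 :: nat \<Rightarrow> 'a)" using t by (auto dest: inj_onD)
    then show False by (metis const_def one_neq_zero tmonom_def zero_neq_one)
  qed
qed

lemma AutA_id_image_tmonom:
  assumes \<sigma>: "ring_aut \<sigma>" and m: "1 < m" and H: "is_Aaut \<sigma> m d H"
    and Hc: "\<And>a. H (const a) = const a" and Ht: "H (tmonom 1 1) = tmonom 1 k" and i: "i < m"
  shows "H (tmonom i a) = tmonom i (a * twisted_prod \<sigma> k i)"
proof -
  have m0: "0 < m" using m by simp
  note Hmul = is_Aaut_Amul[OF H]
  have Hc': "H (tmonom 0 b) = tmonom 0 b" for b using Hc[of b] by (simp add: const_eq_tmonom)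
  have H1: "H (tmonom j 1) = tmonom j (twisted_prod \<sigma> k j)" if "j < m" for j
    using that
  proof (induction j)
    case 0 then show ?case using Hc' by simp
  next
    case (Suc j)
    have "tmonom (Suc j) 1 = Amul \<sigma> m d (tmonom j 1) (tmonom 1 1)"
      using Amul_tmonom[OF \<sigma>, of j m 1 d 1 1] Suc.prems m ring_aut_one[OF ring_aut_funpow[OF \<sigma>]] by simp
    then have "H (tmonom (Suc j) 1) = Amul \<sigma> m d (tmonom j (twisted_prod \<sigma> k j)) (tmonom 1 k)"
      using Hmul[OF tmonom_in_Acar tmonom_in_Acar[OF m]] Suc Ht by simp
    also have "\<dots> = tmonom (Suc j) (twisted_prod \<sigma> k (Suc j))"
      using Amul_tmonom[OF \<sigma>, of j m 1 d "twisted_prod \<sigma> k j" k] Suc.prems m by (simp add: twisted_prod_Suc)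
    finally show ?case .
  qed
  have "tmonom i a = Amul \<sigma> m d (tmonom 0 a) (tmonom i 1)"
    using Amul_tmonom[OF \<sigma> m0 i, of d a 1] i ring_aut_one[OF \<sigma>] by simp
  then have "H (tmonom i a) = Amul \<sigma> m d (tmonom 0 a) (tmonom i (twisted_prod \<sigma> k i))"
    using Hmul[OF tmonom_in_Acar[OF m0] tmonom_in_Acar[OF i]] Hc' H1[OF i] by simp
  also have "\<dots> = tmonom i (a * twisted_prod \<sigma> k i)"
    using Amul_tmonom[OF \<sigma> m0 i, of d a "twisted_prod \<sigma> k i"] i by simp
  finally show ?thesis .
qed

lemma tadd_hom_determined_by_tmonom:
  assumes m: "0 < m"
    and add: "\<And>g h. g \<in> Acar m \<Longrightarrow> h \<in> Acar m \<Longrightarrow> H (tadd g h) = tadd (H g) (H h)"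
    and mon: "\<And>i a. i < m \<Longrightarrow> H (tmonom i a) = tmonom i (a * c i)"
    and g: "g \<in> Acar m"
  shows "H g = (\<lambda>n. g n * c n)"
proof -
  define trunc where "trunc j = (\<lambda>n. if n < j then g n else 0)" for j
  have trunc_in: "trunc j \<in> Acar m" for j using Acar_high[OF g] by (simp add: trunc_def Acar_def deg_lt_def)
  have "H (trunc j) = (\<lambda>n. trunc j n * c n)" if "j \<le> m" for j
    using that
  proof (induction j)
    case 0
    have "trunc 0 = tmonom 0 0" by (simp add: trunc_def tmonom_def fun_eq_iff)
    then show ?case using mon[OF m, of 0] by (simp add: trunc_def tmonom_def fun_eq_iff)
  next
    case (Suc j)
    have "trunc (Suc j) = tadd (trunc j) (tmonom j (g j))"
      by (auto simp: trunc_def tadd_def tmonom_def fun_eq_iff)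
    then have "H (trunc (Suc j)) = tadd (\<lambda>n. trunc j n * c n) (tmonom j (g j * c j))"
      using add[OF trunc_in tmonom_in_Acar] mon Suc by simp
    also have "\<dots> = (\<lambda>n. trunc (Suc j) n * c n)"
      by (auto simp: trunc_def tadd_def tmonom_def fun_eq_iff)
    finally show ?case .
  qed
  moreover have "trunc m = g" using Acar_high[OF g] by (auto simp: trunc_def fun_eq_iff)
  ultimately show ?thesis by auto
qed

lemma AutA_id_twisted_prod_eq_1:
  assumes \<sigma>: "ring_aut \<sigma>" and m: "1 < m" and d: "d \<noteq> 0" and H: "is_Aaut \<sigma> m d H"
    and Hc: "\<And>a. H (const a) = const a" and Ht: "H (tmonom 1 1) = tmonom 1 k"
  shows "twisted_prod \<sigma> k m = 1"
proof -
  have i: "m - 1 < m" using m by simp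
  have "Amul \<sigma> m d (tmonom (m - 1) 1) (tmonom 1 1) = const d"
    using Amul_tmonom[OF \<sigma> i, of 1 d 1 1] m ring_aut_one[OF ring_aut_funpow[OF \<sigma>]]
    by (simp add: const_eq_tmonom)
  then have "const d = H (Amul \<sigma> m d (tmonom (m - 1) 1) (tmonom 1 1))" using Hc by simp
  also have "\<dots> = Amul \<sigma> m d (H (tmonom (m - 1) 1)) (H (tmonom 1 1))"
    by (rule is_Aaut_Amul[OF H tmonom_in_Acar[OF i] tmonom_in_Acar[OF m]])
  also have "\<dots> = Amul \<sigma> m d (tmonom (m - 1) (twisted_prod \<sigma> k (m - 1))) (tmonom 1 k)"
    using AutA_id_image_tmonom[OF \<sigma> m H Hc Ht i, of 1] Ht by simp
  also have "\<dots> = const (twisted_prod \<sigma> k m * d)"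
    using Amul_tmonom[OF \<sigma> i, of 1 d "twisted_prod \<sigma> k (m - 1)" k] m twisted_prod_Suc[of \<sigma> k "m - 1"]
    by (simp add: const_eq_tmonom)
  finally have "d = twisted_prod \<sigma> k m * d"
    by (metis const_def)
  then have "(twisted_prod \<sigma> k m - 1) * d = 0" by (simp add: left_diff_distrib)
  then show ?thesis using d by simp
qed

lemma normone_group_carrier:
  "carrier (normone_group \<sigma> m) = {k \<in> center. k \<noteq> 0 \<and> twisted_prod \<sigma> k m = 1}"
  by (simp add: normone_group_def twisted_prod_def)

lemma AutA_id_eq_Hid:
  assumes \<sigma>: "ring_aut \<sigma>" and ro: "restr_order \<sigma> m" and d: "d \<noteq> 0"
    and H: "H \<in> carrier (AutA_id \<sigma> m d)"
  shows "\<exists>k\<in>carrier (normone_group \<sigma> m). H = Hid \<sigma> m k"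
proof -
  have aut: "is_Aaut \<sigma> m d H" and Hc: "\<And>a. H (const a) = const a" using H by (auto simp: AutA_id_def)
  have ext: "H \<in> extensional (Acar m)" "Hid \<sigma> m k \<in> extensional (Acar m)" for k
    using aut by (simp_all add: is_Aaut_def Hid_def)
  have "0 < m" using ro by (simp add: restr_order_def)
  consider "m = 1" | "1 < m" using \<open>0 < m\<close> by linarith
  then show ?thesis
  proof cases
    case 1
    have "H g = Hid \<sigma> m 1 g" if "g \<in> Acar m" for g
    proof -
      have "g = const (g 0)" using Acar_high[OF that] 1 by (auto simp: const_def fun_eq_iff)
      then show ?thesis using Hc Hid_1[OF \<sigma> that] by metis
    qed
    then have "H = Hid \<sigma> m 1" by (rule extensionalityI[OF ext])
    moreover have "1 \<in> carrier (normone_group \<sigma> m)"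
      using 1 by (simp add: normone_group_carrier center_one twisted_prod_Suc ring_aut_one[OF \<sigma>])
    ultimately show ?thesis by blast
  next
    case 2
    obtain k where k: "k \<in> center" "k \<noteq> 0" and Ht: "H (tmonom 1 1) = tmonom 1 k"
      using AutA_id_image_t[OF \<sigma> ro 2 aut Hc] .
    have "H g = Hid \<sigma> m k g" if "g \<in> Acar m" for g
      using tadd_hom_determined_by_tmonom[OF \<open>0 < m\<close> is_Aaut_tadd[OF aut]
          AutA_id_image_tmonom[OF \<sigma> 2 aut Hc Ht] that]
      by (simp add: Hid_eq[OF that])
    then have "H = Hid \<sigma> m k" by (rule extensionalityI[OF ext])
    moreover have "k \<in> carrier (normone_group \<sigma> m)"
      using k AutA_id_twisted_prod_eq_1[OF \<sigma> 2 d aut Hc Ht] by (simp add: normone_group_carrier)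
    ultimately show ?thesis by blast
  qed
qed

lemma normone_group_is_group:
  assumes \<sigma>: "ring_aut \<sigma>"
  shows "group (normone_group \<sigma> m)"
proof (rule groupI)
  have "1 \<in> carrier (normone_group \<sigma> m)"
    using twisted_prod_fixed[of \<sigma> 1 m] ring_aut_one[OF \<sigma>] by (simp add: normone_group_carrier center_one)
  then show "\<one>\<^bsub>normone_group \<sigma> m\<^esub> \<in> carrier (normone_group \<sigma> m)"
    by (simp add: normone_group_def)
next
  fix k assume "k \<in> carrier (normone_group \<sigma> m)"
  then have k: "k \<in> center" "k \<noteq> 0" "twisted_prod \<sigma> k m = 1" by (auto simp: normone_group_carrier)
  have ki: "inverse k \<in> center" using center_inverse[OF k(1)] .
  have "twisted_prod \<sigma> (inverse k * k) m = twisted_prod \<sigma> (inverse k) m"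
    using twisted_prod_mult[OF \<sigma> ki, of k m] k(3) by simp
  moreover have "twisted_prod \<sigma> (inverse k * k) m = 1"
    using twisted_prod_fixed[of \<sigma> 1 m] ring_aut_one[OF \<sigma>] k(2) by simp
  ultimately have "inverse k \<in> carrier (normone_group \<sigma> m)"
    using ki k(2) by (simp add: normone_group_carrier)
  then show "\<exists>y\<in>carrier (normone_group \<sigma> m). y \<otimes>\<^bsub>normone_group \<sigma> m\<^esub> k = \<one>\<^bsub>normone_group \<sigma> m\<^esub>"
    using k(2) by (auto simp: normone_group_def)
next
  fix k l assume "k \<in> carrier (normone_group \<sigma> m)" "l \<in> carrier (normone_group \<sigma> m)"
  then have "k \<in> center" "l \<in> center" "k * l \<noteq> 0" "twisted_prod \<sigma> (k * l) m = 1"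
    using twisted_prod_mult[OF \<sigma>] by (auto simp: normone_group_carrier)
  then have "k * l \<in> carrier (normone_group \<sigma> m)"
    using center_mult by (simp add: normone_group_carrier)
  then show "k \<otimes>\<^bsub>normone_group \<sigma> m\<^esub> l \<in> carrier (normone_group \<sigma> m)"
    by (simp add: normone_group_def)
qed (simp_all add: normone_group_def mult.assoc)

lemma Hid_in_AutA_id:
  assumes "ring_aut \<sigma>" "0 < m" "k \<in> carrier (normone_group \<sigma> m)"
  shows "Hid \<sigma> m k \<in> carrier (AutA_id \<sigma> m d)"
proof -
  have "is_Aaut \<sigma> m d (Hid \<sigma> m k)"
    using assms(3) is_Aaut_Hid[OF assms(1,2)] by (simp add: normone_group_carrier)
  moreover have "\<forall>a. Hid \<sigma> m k (const a) = const a" using Hid_const[OF assms(2)] by blast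
  ultimately show ?thesis by (simp add: AutA_id_def)
qed

lemma Hid_inj_on:
  assumes "0 < m"
  shows "inj_on (Hid \<sigma> m) (carrier (normone_group \<sigma> m))"
proof (cases "m = 1")
  case True
  then have "carrier (normone_group \<sigma> m) \<subseteq> {1}" by (auto simp: normone_group_carrier twisted_prod_Suc)
  then show ?thesis by (rule inj_on_subset[rotated]) simp
next
  case False
  then have "1 < m" using assms by simp
  then show ?thesis using Hid_tmonom_1 by (metis inj_onI)
qed

lemma Hid_iso:
  assumes \<sigma>: "ring_aut \<sigma>" and ro: "restr_order \<sigma> m" and d: "d \<noteq> 0"
  shows "Hid \<sigma> m \<in> iso (normone_group \<sigma> m) (AutA_id \<sigma> m d)"
proof -
  have m: "0 < m" using ro by (simp add: restr_order_def)
  have "Hid \<sigma> m ` carrier (normone_group \<sigma> m) = carrier (AutA_id \<sigma> m d)"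
    using Hid_in_AutA_id[OF \<sigma> m] AutA_id_eq_Hid[OF \<sigma> ro d] by blast
  then show ?thesis
    using Hid_inj_on[OF m] Hid_in_AutA_id[OF \<sigma> m] compose_Hid[OF \<sigma>]
    by (auto simp: iso_def hom_def bij_betw_def AutA_id_def normone_group_def)
qed

lemma (in group) ord_eq_of_primitive:
  assumes "x \<in> carrier G" "0 < n" "x [^] n = \<one>" "\<And>j. 0 < j \<Longrightarrow> j < n \<Longrightarrow> x [^] j \<noteq> \<one>"
  shows "ord x = n"
proof -
  have "ord x dvd n" using assms(1,3) pow_eq_id by blast
  moreover have "0 < ord x" using assms(1-3) ord_eq_0 by (metis gr0I less_not_refl)
  moreover have "\<not> ord x < n" using assms(4) pow_ord_eq_1[OF assms(1)] \<open>0 < ord x\<close> by blast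
  ultimately show ?thesis using assms(2) by (simp add: dvd_imp_le eq_iff not_less)
qed

lemma Hid_pow:
  assumes "ring_aut \<sigma>" "k \<in> center"
  shows "Hid \<sigma> m k [^]\<^bsub>AutA \<sigma> m d\<^esub> n = Hid \<sigma> m (k ^ n)"
proof (induction n)
  case 0 then show ?case using restrict_id_eq_Hid_1[OF assms(1)] by (simp add: AutA_def)
next
  case (Suc n)
  then show ?case
    using compose_Hid[OF assms(1) center_power[OF assms(2), of n], of m k] by (simp add: AutA_def power_commutes)
qed

lemma Hid_eq_id_iff:
  assumes "ring_aut \<sigma>" "1 < m"
  shows "Hid \<sigma> m k = restrict id (Acar m) \<longleftrightarrow> k = 1"
proof
  assume "Hid \<sigma> m k = restrict id (Acar m)"
  then have "k = restrict id (Acar m) (tmonom 1 1) 1" using Hid_tmonom_1[OF assms(2)] by metis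
  also have "restrict id (Acar m) (tmonom 1 1) = tmonom 1 (1::'a)"
    by (simp only: restrict_apply'[OF tmonom_in_Acar[OF assms(2)]] id_apply)
  finally show "k = 1" by (simp add: tmonom_def)
qed (simp add: restrict_id_eq_Hid_1[OF assms(1)])

lemma ord_Hid_primitive_root:
  assumes \<sigma>: "ring_aut \<sigma>" and m: "0 < m" and \<omega>: "\<omega> \<in> fixed_center \<sigma>" "\<omega> ^ m = 1"
    and primitive: "\<And>j. 0 < j \<Longrightarrow> j < m \<Longrightarrow> \<omega> ^ j \<noteq> 1"
  shows "Hid \<sigma> m \<omega> \<in> carrier (AutA \<sigma> m d)" "group.ord (AutA \<sigma> m d) (Hid \<sigma> m \<omega>) = m"
proof -
  interpret AutA: group "AutA \<sigma> m d" using AutA_group[OF \<sigma> m] .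
  have c: "\<omega> \<in> center" "\<sigma> \<omega> = \<omega>" using \<omega>(1) by (auto simp: fixed_center_def)
  have "\<omega> \<noteq> 0" using \<omega>(2) m by (cases m) auto
  then show H: "Hid \<sigma> m \<omega> \<in> carrier (AutA \<sigma> m d)"
    using is_Aaut_Hid[OF \<sigma> m c(1)] twisted_prod_fixed[of \<sigma> \<omega>, OF c(2)] \<omega>(2) by (simp add: AutA_def)
  have one: "\<one>\<^bsub>AutA \<sigma> m d\<^esub> = restrict id (Acar m)" by (simp add: AutA_def)
  show "AutA.ord (Hid \<sigma> m \<omega>) = m"
  proof (rule AutA.ord_eq_of_primitive[OF H m])
    show "Hid \<sigma> m \<omega> [^]\<^bsub>AutA \<sigma> m d\<^esub> m = \<one>\<^bsub>AutA \<sigma> m d\<^esub>"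
      using Hid_pow[OF \<sigma> c(1)] restrict_id_eq_Hid_1[OF \<sigma>] \<omega>(2) one by simp
    show "Hid \<sigma> m \<omega> [^]\<^bsub>AutA \<sigma> m d\<^esub> j \<noteq> \<one>\<^bsub>AutA \<sigma> m d\<^esub>" if "0 < j" "j < m" for j
      using Hid_pow[OF \<sigma> c(1)] Hid_eq_id_iff[OF \<sigma>] primitive[OF that] that one by simp
  qed
qed

theorem corollary3p2:
  fixes \<sigma> :: "'a::division_ring \<Rightarrow> 'a" and m :: nat and d :: 'a
  assumes "fin_dim_over_center TYPE('a)"
    and "ring_aut \<sigma>"
    and "restr_order \<sigma> m"
    and "d \<notin> fixed_center \<sigma>"
  shows "AutA_id \<sigma> m d \<cong> normone_group \<sigma> m \<and>
         (\<forall>\<omega>. \<omega> \<in> fixed_center \<sigma> \<and> \<omega> ^ m = 1 \<and> (\<forall>j. 0 < j \<and> j < m \<longrightarrow> \<omega> ^ j \<noteq> 1) \<longrightarrow>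
           group (AutA \<sigma> m d) \<and> Hid \<sigma> m \<omega> \<in> carrier (AutA \<sigma> m d) \<and>
           subgroup (generate (AutA \<sigma> m d) {Hid \<sigma> m \<omega>}) (AutA \<sigma> m d) \<and>
           group.ord (AutA \<sigma> m d) (Hid \<sigma> m \<omega>) = m)"
proof -
  have \<sigma>: "ring_aut \<sigma>" and ro: "restr_order \<sigma> m" using assms(2,3) .
  have m: "0 < m" using ro by (simp add: restr_order_def)
  have "0 \<in> fixed_center \<sigma>" using ring_aut_zero[OF \<sigma>] by (simp add: fixed_center_def center_def)
  then have d: "d \<noteq> 0" using assms(4) by blast
  have "AutA_id \<sigma> m d \<cong> normone_group \<sigma> m"
    using group.iso_sym[OF normone_group_is_group[OF \<sigma>] is_isoI[OF Hid_iso[OF \<sigma> ro d]]] .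
  moreover have "group (AutA \<sigma> m d) \<and> Hid \<sigma> m \<omega> \<in> carrier (AutA \<sigma> m d) \<and>
      subgroup (generate (AutA \<sigma> m d) {Hid \<sigma> m \<omega>}) (AutA \<sigma> m d) \<and>
      group.ord (AutA \<sigma> m d) (Hid \<sigma> m \<omega>) = m"
    if "\<omega> \<in> fixed_center \<sigma>" "\<omega> ^ m = 1" "\<forall>j. 0 < j \<and> j < m \<longrightarrow> \<omega> ^ j \<noteq> 1" for \<omega>
  proof -
    have "\<And>j. 0 < j \<Longrightarrow> j < m \<Longrightarrow> \<omega> ^ j \<noteq> 1" using that(3) by blast
    note H = ord_Hid_primitive_root[OF \<sigma> m that(1,2) this, of d]
    show ?thesis
      using AutA_group[OF \<sigma> m] H group.generate_is_subgroup[OF AutA_group[OF \<sigma> m], of "{Hid \<sigma> m \<omega>}"]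
      by simp
  qed
  ultimately show ?thesis by blast
qed

end
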